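(* Let $f$ be an orientation-preserving homeomorphism of the circle $\mathbb T=\mathbb R/\mathbb Z$. Then ${\rm h_{pol}}(f)\in\{0,1\}$, and ${\rm h_{pol}}(f)=0$ if and only if $f$ is topologically conjugate to a rotation of $\mathbb T$.
   Context: For a continuous map $f:X\to X$ of a compact metric space $(X,d)$ define the dynamical metrics $d_n^f(x,y)=\max_{0\le k\le n-1}d(f^k(x),f^k(y))$. For $Y\subset X$ and $\varepsilon>0$ let $G_n^f(Y,\varepsilon)$ be the minimal number of $d_n^f$-balls of radius $\varepsilon$ needed to cover $Y$. The polynomial entropy of $f$ on $Y$ is ${\rm h_{pol}}(f,Y)=\lim_{\varepsilon\to0}\limsup_{n\to\infty}\frac{\log G_n^f(Y,\varepsilon)}{\log n}$, and ${\rm h_{pol}}(f)={\rm h_{pol}}(f,X)$. The circle carries its standard metric. A rotation of $\mathbb T$ is a map $\bar x\mapsto \bar x+\bar a$. *)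

theory Defs
  imports "HOL-Analysis.Analysis"
begin

text \<open>Points of R/Z are represented by their unique representative in [0,1).\<close>

typedef circle = "{x::real. 0 \<le> x \<and> x < 1}"
  by (rule exI[of _ 0]) simp

definition circ_proj :: "real \<Rightarrow> circle" where
  "circ_proj x = Abs_circle (frac x)"

lemma circle_rep_dist_aux:
  fixes u v w :: real
  assumes "0 \<le> u" "u < 1" "0 \<le> v" "v < 1" "0 \<le> w" "w < 1"
  shows "min \<bar>u - w\<bar> (1 - \<bar>u - w\<bar>) \<le> min \<bar>u - v\<bar> (1 - \<bar>u - v\<bar>) + min \<bar>w - v\<bar> (1 - \<bar>w - v\<bar>)"
  using assms by (simp add: min_def abs_if split: if_splits) linarith?

instantiation circle :: metric_space
begin

text \<open>Standard metric of R/Z: distance to the nearest integer of the difference.\<close>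
definition dist_circle :: "circle \<Rightarrow> circle \<Rightarrow> real" where
  "dist_circle a b = min \<bar>Rep_circle a - Rep_circle b\<bar> (1 - \<bar>Rep_circle a - Rep_circle b\<bar>)"

definition uniformity_circle :: "(circle \<times> circle) filter" where
  "uniformity_circle = (INF e\<in>{0<..}. principal {(x, y). dist x y < e})"

definition open_circle :: "circle set \<Rightarrow> bool" where
  "open_circle U = (\<forall>x\<in>U. \<forall>\<^sub>F (x', y) in uniformity. x' = x \<longrightarrow> y \<in> U)"

instance
proof
  fix x y z :: circle
  have rx: "0 \<le> Rep_circle x" "Rep_circle x < 1" using Rep_circle[of x] by auto
  have ry: "0 \<le> Rep_circle y" "Rep_circle y < 1" using Rep_circle[of y] by auto
  have rz: "0 \<le> Rep_circle z" "Rep_circle z < 1" using Rep_circle[of z] by auto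
  show "(dist x y = 0) = (x = y)"
    using rx ry by (auto simp: dist_circle_def min_def Rep_circle_inject[symmetric] split: if_splits)
  show "dist x y \<le> dist x z + dist y z"
    unfolding dist_circle_def using circle_rep_dist_aux[OF rx rz ry] by (simp add: abs_minus_commute)
qed (simp_all add: uniformity_circle_def open_circle_def)

end

definition dyn_dist :: "('a::metric_space \<Rightarrow> 'a) \<Rightarrow> nat \<Rightarrow> 'a \<Rightarrow> 'a \<Rightarrow> real" where
  "dyn_dist f n x y = (MAX k\<in>{..<n}. dist ((f ^^ k) x) ((f ^^ k) y))"

definition cover_num :: "('a::metric_space \<Rightarrow> 'a) \<Rightarrow> 'a set \<Rightarrow> nat \<Rightarrow> real \<Rightarrow> nat" where
  "cover_num f Y n \<epsilon> = (LEAST m. \<exists>C. finite C \<and> card C = m \<and>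
       Y \<subseteq> (\<Union>c\<in>C. {y. dyn_dist f n c y < \<epsilon>}))"

definition hpol_on :: "('a::metric_space \<Rightarrow> 'a) \<Rightarrow> 'a set \<Rightarrow> ereal" where
  "hpol_on f Y = Lim (at_right (0::real))
     (\<lambda>\<epsilon>. limsup (\<lambda>n. ereal (ln (real (cover_num f Y n \<epsilon>)) / ln (real n))))"

definition hpol :: "('a::metric_space \<Rightarrow> 'a) \<Rightarrow> ereal" where
  "hpol f = hpol_on f UNIV"

definition orientation_preserving_homeo :: "(circle \<Rightarrow> circle) \<Rightarrow> bool" where
  "orientation_preserving_homeo f \<longleftrightarrow>
     (\<exists>g. homeomorphism UNIV UNIV f g) \<and>
     (\<exists>F::real \<Rightarrow> real. continuous_on UNIV F \<and> strict_mono F \<and> (\<forall>x. F (x + 1) = F x + 1) \<and>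
        (\<forall>x. f (circ_proj x) = circ_proj (F x)))"

definition is_rotation :: "(circle \<Rightarrow> circle) \<Rightarrow> bool" where
  "is_rotation g \<longleftrightarrow> (\<exists>a::real. \<forall>x. g (circ_proj x) = circ_proj (x + a))"

definition top_conjugate :: "('a::topological_space \<Rightarrow> 'a) \<Rightarrow> ('b::topological_space \<Rightarrow> 'b) \<Rightarrow> bool" where
  "top_conjugate f g \<longleftrightarrow> (\<exists>h h'. homeomorphism UNIV UNIV h h' \<and> h \<circ> f = g \<circ> h)"

end

theory Submission
  imports Defs "HOL-Analysis.Kronecker_Approximation_Theorem" "HOL-Real_Asymp.Real_Asymp"
begin

(* An orientation-preserving circle homeomorphism f is induced by an increasing homeomorphism F
   of the line with F (x + 1) = F x + 1, which has a rotation number rho.  Either F is conjugate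
   to the translation by rho, and then f is conjugate to a rotation: the rotation is an isometry,
   so boundedly many dynamical balls cover the circle for every time n, and hpol f = 0.  Or some
   iterate F^q has a wandering interval: for rho = p/q a point moved by F^q - p spans one, and for
   irrational rho an interval collapsed by the semiconjugacy H x = limsup (F^k x - k rho) does.
   The preimages of the grid Z/N under F^k, k < n, cut the circle into at most N n + 1 arcs of
   small dynamical diameter, while the backward q-orbit of the centre of a wandering interval
   yields about n/q dynamically separated points.  So the covering numbers grow linearly in n
   and hpol f = 1. *)

lemma Rep_circle_circ_proj: "Rep_circle (circ_proj x) = frac x"
  unfolding circ_proj_def by (rule Abs_circle_inverse) (simp add: frac_lt_1)

lemma circ_proj_Rep_circle: "circ_proj (Rep_circle c) = c"
  using Rep_circle[of c] by (simp add: circ_proj_def frac_eq Rep_circle_inverse)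

lemma circ_proj_cases:
  obtains x where "c = circ_proj x"
  using circ_proj_Rep_circle by metis

lemma circ_proj_add_of_int [simp]: "circ_proj (x + of_int m) = circ_proj x"
  unfolding circ_proj_def by simp

lemma circ_proj_eq_iff: "circ_proj x = circ_proj y \<longleftrightarrow> (\<exists>m::int. x = y + of_int m)"
proof
  assume "circ_proj x = circ_proj y"
  then have "frac x = frac y"
    by (metis Rep_circle_circ_proj)
  then have "x = y + of_int (\<lfloor>x\<rfloor> - \<lfloor>y\<rfloor>)"
    by (simp add: frac_def)
  then show "\<exists>m::int. x = y + of_int m" ..
qed auto

lemma dist_circ_proj_le: "dist (circ_proj x) (circ_proj y) \<le> \<bar>x - y - of_int m\<bar>"
proof -
  define d where "d = frac x - frac y"
  define j where "j = m - (\<lfloor>x\<rfloor> - \<lfloor>y\<rfloor>)"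
  have "\<bar>d\<bar> < 1"
    using frac_lt_1[of x] frac_lt_1[of y] frac_ge_0[of x] frac_ge_0[of y] unfolding d_def by linarith
  moreover have "x - y - of_int m = d - of_int j"
    unfolding d_def j_def frac_def by simp
  moreover have "\<bar>real_of_int j\<bar> \<ge> 1" if "j \<noteq> 0"
    using that by linarith
  ultimately show ?thesis
    by (cases "j = 0") (auto simp: dist_circle_def Rep_circle_circ_proj d_def[symmetric])
qed

lemma dist_circ_proj_le_abs: "dist (circ_proj x) (circ_proj y) \<le> \<bar>x - y\<bar>"
  using dist_circ_proj_le[of x y 0] by simp

lemma dist_circ_proj_attained: "\<exists>m::int. dist (circ_proj x) (circ_proj y) = \<bar>x - y - of_int m\<bar>"
proof -
  define d where "d = frac x - frac y"
  define j where "j = \<lfloor>x\<rfloor> - \<lfloor>y\<rfloor>"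
  have d: "\<bar>d\<bar> < 1"
    using frac_lt_1[of x] frac_lt_1[of y] frac_ge_0[of x] frac_ge_0[of y] unfolding d_def by linarith
  have xy: "x - y - of_int i = d - of_int (i - j)" for i
    unfolding d_def j_def frac_def by simp
  have dist: "dist (circ_proj x) (circ_proj y) = min \<bar>d\<bar> (1 - \<bar>d\<bar>)"
    by (simp add: dist_circle_def Rep_circle_circ_proj d_def)
  consider "\<bar>d\<bar> \<le> 1 - \<bar>d\<bar>" | "\<bar>d\<bar> > 1 - \<bar>d\<bar>" "d \<ge> 0" | "\<bar>d\<bar> > 1 - \<bar>d\<bar>" "d < 0"
    by linarith
  then show ?thesis
  proof cases
    case 1
    then show ?thesis using dist xy[of j] by (intro exI[of _ j]) simp
  next
    case 2
    then show ?thesis using dist xy[of "j + 1"] d by (intro exI[of _ "j + 1"]) simp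
  next
    case 3
    then show ?thesis using dist xy[of "j - 1"] d by (intro exI[of _ "j - 1"]) simp
  qed
qed

lemma dist_circ_proj_add: "dist (circ_proj (x + a)) (circ_proj (y + a)) = dist (circ_proj x) (circ_proj y)"
proof (rule antisym)
  obtain m where "dist (circ_proj x) (circ_proj y) = \<bar>x - y - of_int m\<bar>"
    using dist_circ_proj_attained by blast
  then show "dist (circ_proj (x + a)) (circ_proj (y + a)) \<le> dist (circ_proj x) (circ_proj y)"
    using dist_circ_proj_le[of "x + a" "y + a" m] by simp
  obtain m' where "dist (circ_proj (x + a)) (circ_proj (y + a)) = \<bar>x + a - (y + a) - of_int m'\<bar>"
    using dist_circ_proj_attained by blast
  then show "dist (circ_proj x) (circ_proj y) \<le> dist (circ_proj (x + a)) (circ_proj (y + a))"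
    using dist_circ_proj_le[of x y m'] by simp
qed

lemma continuous_on_circ_proj: "continuous_on A circ_proj"
  unfolding continuous_on_iff by (metis dist_circ_proj_le_abs dist_real_def le_less_trans)

lemma compact_UNIV_circle: "compact (UNIV :: circle set)"
proof -
  have "c \<in> circ_proj ` {0..1}" for c
    using circ_proj_Rep_circle[of c] Rep_circle[of c] by (metis atLeastAtMost_iff image_eqI less_eq_real_def mem_Collect_eq)
  then have "UNIV = circ_proj ` {0..1}"
    by auto
  then show ?thesis
    using compact_continuous_image[OF continuous_on_circ_proj compact_Icc] by metis
qed

text \<open>This is independent of the chosen representative only when \<open>H\<close> commutes with integer
  translations.\<close>
definition circle_map :: "(real \<Rightarrow> real) \<Rightarrow> circle \<Rightarrow> circle" where
  "circle_map H c = circ_proj (H (Rep_circle c))"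

lemma circle_map_circ_proj:
  assumes "\<And>x m. H (x + of_int m) = H x + of_int m"
  shows "circle_map H (circ_proj x) = circ_proj (H x)"
proof -
  have "Rep_circle (circ_proj x) = x + of_int (- \<lfloor>x\<rfloor>)"
    by (simp add: Rep_circle_circ_proj frac_def)
  then show ?thesis
    unfolding circle_map_def by (simp only: assms circ_proj_add_of_int)
qed

lemma continuous_on_circle_map:
  assumes cont: "continuous_on UNIV H" and int: "\<And>x m. H (x + of_int m) = H x + of_int m"
  shows "continuous_on UNIV (circle_map H)"
  unfolding continuous_on_iff
proof (intro ballI allI impI)
  fix c :: circle and e :: real
  assume "e > 0"
  obtain x where c: "c = circ_proj x"
    by (rule circ_proj_cases)
  obtain d where "d > 0" and d: "\<And>y. \<bar>y - x\<bar> < d \<Longrightarrow> \<bar>H y - H x\<bar> < e"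
    using cont \<open>e > 0\<close> unfolding continuous_on_iff dist_real_def by blast
  have "dist (circle_map H c') (circle_map H c) < e" if "dist c' c < d" for c'
  proof -
    obtain y0 where y0: "c' = circ_proj y0"
      by (rule circ_proj_cases)
    obtain m where m: "dist c' c = \<bar>y0 - x - of_int m\<bar>"
      unfolding y0 c using dist_circ_proj_attained by blast
    define y where "y = y0 + of_int (- m)"
    have "c' = circ_proj y"
      unfolding y_def y0 by (simp only: circ_proj_add_of_int)
    then have "dist (circle_map H c') (circle_map H c) \<le> \<bar>H y - H x\<bar>"
      unfolding c by (simp add: circle_map_circ_proj int dist_circ_proj_le_abs)
    also have "\<dots> < e"
      using d m that unfolding y_def by simp
    finally show ?thesis .
  qed
  then show "\<exists>d>0. \<forall>c'\<in>UNIV. dist c' c < d \<longrightarrow> dist (circle_map H c') (circle_map H c) < e"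
    using \<open>d > 0\<close> by blast
qed

lemma funpow_circle_map:
  assumes "\<And>x m. H (x + of_int m) = H x + of_int m"
  shows "(circle_map H ^^ k) (circ_proj x) = circ_proj ((H ^^ k) x)"
  by (induction k) (simp_all add: circle_map_circ_proj assms)


lemma dyn_dist_commute: "dyn_dist f n x y = dyn_dist f n y x"
  unfolding dyn_dist_def by (simp add: dist_commute)

lemma dyn_dist_less_iff:
  assumes "n \<ge> 1"
  shows "dyn_dist f n x y < e \<longleftrightarrow> (\<forall>k<n. dist ((f ^^ k) x) ((f ^^ k) y) < e)"
  unfolding dyn_dist_def using assms by (subst Max_less_iff) (auto simp: lessThan_empty_iff)

lemma dist_funpow_le_dyn_dist:
  assumes "k < n"
  shows "dist ((f ^^ k) x) ((f ^^ k) y) \<le> dyn_dist f n x y"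
  unfolding dyn_dist_def using assms by (intro Max_ge) auto

lemma dyn_dist_triangle:
  assumes "n \<ge> 1"
  shows "dyn_dist f n x y \<le> dyn_dist f n z x + dyn_dist f n z y"
proof -
  have "dist ((f ^^ k) x) ((f ^^ k) y) \<le> dyn_dist f n z x + dyn_dist f n z y" if "k < n" for k
    using dist_triangle3[of "(f ^^ k) x" "(f ^^ k) y" "(f ^^ k) z"]
      dist_funpow_le_dyn_dist[OF that, of f z x] dist_funpow_le_dyn_dist[OF that, of f z y]
    by (simp add: dist_commute)
  then show ?thesis
    unfolding dyn_dist_def using assms by (intro Max.boundedI) (auto simp: lessThan_empty_iff)
qed

lemma cover_num_le_card:
  assumes "finite C" "Y \<subseteq> (\<Union>c\<in>C. {y. dyn_dist f n c y < e})"
  shows "cover_num f Y n e \<le> card C"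
  unfolding cover_num_def by (rule Least_le) (use assms in blast)

text \<open>Each ball of radius \<open>e\<close> contains at most one of the \<open>2e\<close>-separated points.\<close>
lemma separated_card_le_cover_num:
  assumes n: "n \<ge> 1"
    and cover: "\<exists>C. finite C \<and> Y \<subseteq> (\<Union>c\<in>C. {y. dyn_dist f n c y < e})"
    and p: "p ` {..<M} \<subseteq> Y"
    and sep: "\<And>i j. i < M \<Longrightarrow> j < M \<Longrightarrow> i \<noteq> j \<Longrightarrow> dyn_dist f n (p i) (p j) \<ge> 2 * e"
  shows "M \<le> cover_num f Y n e"
proof -
  obtain C where C: "finite C" "card C = cover_num f Y n e" "Y \<subseteq> (\<Union>c\<in>C. {y. dyn_dist f n c y < e})"
    using LeastI_ex[of "\<lambda>m. \<exists>C. finite C \<and> card C = m \<and> Y \<subseteq> (\<Union>c\<in>C. {y. dyn_dist f n c y < e})"]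
      cover unfolding cover_num_def by blast
  have "\<forall>i<M. \<exists>c. c \<in> C \<and> dyn_dist f n c (p i) < e"
    using C(3) p by blast
  then obtain center where center: "\<And>i. i < M \<Longrightarrow> center i \<in> C \<and> dyn_dist f n (center i) (p i) < e"
    by metis
  have "inj_on center {..<M}"
  proof (rule inj_onI)
    fix i j
    assume ij: "i \<in> {..<M}" "j \<in> {..<M}" "center i = center j"
    show "i = j"
    proof (rule ccontr)
      assume "i \<noteq> j"
      then have "2 * e \<le> dyn_dist f n (p i) (p j)"
        using sep ij by auto
      also have "\<dots> \<le> dyn_dist f n (center i) (p i) + dyn_dist f n (center i) (p j)"
        by (rule dyn_dist_triangle[OF n])
      also have "\<dots> < 2 * e"
        using center[of i] center[of j] ij by simp
      finally show False by simp
    qed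
  qed
  moreover have "center ` {..<M} \<subseteq> C"
    using center by auto
  ultimately show ?thesis
    using card_inj_on_le[OF _ _ C(1), of center "{..<M}"] C(2) by simp
qed

definition cover_exponent :: "('a::metric_space \<Rightarrow> 'a) \<Rightarrow> real \<Rightarrow> ereal" where
  "cover_exponent f e = limsup (\<lambda>n. ereal (ln (real (cover_num f UNIV n e)) / ln (real n)))"

lemma hpol_eqI:
  assumes "b > 0" and "\<And>e. 0 < e \<Longrightarrow> e < b \<Longrightarrow> cover_exponent f e = l"
  shows "hpol f = l"
proof -
  have "eventually (\<lambda>e. cover_exponent f e = l) (at_right 0)"
    using eventually_at_right_real[OF assms(1)] by eventually_elim (use assms(2) in auto)
  then have "(cover_exponent f \<longlongrightarrow> l) (at_right 0)"
    by (rule tendsto_eventually)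
  then show ?thesis
    unfolding hpol_def hpol_on_def cover_exponent_def[abs_def] by (intro tendsto_Lim) simp_all
qed

lemma cover_exponent_eqI:
  assumes "(\<lambda>n. ln (real (cover_num f UNIV n e)) / ln (real n)) \<longlonglongrightarrow> l"
  shows "cover_exponent f e = ereal l"
  unfolding cover_exponent_def by (rule lim_imp_Limsup) (simp_all add: tendsto_ereal assms)

lemma ln_over_ln_tendsto_0_if_bounded:
  fixes a :: "nat \<Rightarrow> nat"
  assumes "\<forall>\<^sub>F n in sequentially. a n \<le> K"
  shows "(\<lambda>n. ln (real (a n)) / ln (real n)) \<longlonglongrightarrow> 0"
proof (rule tendsto_sandwich[of "\<lambda>_. 0" _ _ "\<lambda>n. ln (real (max K 1)) / ln (real n)"])
  have "0 \<le> ln (real (a n)) / ln (real n) \<and> ln (real (a n)) / ln (real n) \<le> ln (real (max K 1)) / ln (real n)"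
    if "n \<ge> 2" "a n \<le> K" for n
    using that by (cases "a n = 0") (auto intro!: divide_right_mono)
  then show "\<forall>\<^sub>F n in sequentially. 0 \<le> ln (real (a n)) / ln (real n)"
    "\<forall>\<^sub>F n in sequentially. ln (real (a n)) / ln (real n) \<le> ln (real (max K 1)) / ln (real n)"
    using eventually_conj[OF assms eventually_ge_at_top[of 2]] by (auto elim!: eventually_mono)
qed real_asymp+

lemma ln_over_ln_tendsto_1_if_linear:
  fixes a :: "nat \<Rightarrow> nat"
  assumes "\<forall>\<^sub>F n in sequentially. n \<le> q * a n \<and> a n \<le> N * n"
  shows "(\<lambda>n. ln (real (a n)) / ln (real n)) \<longlonglongrightarrow> 1"
proof (rule tendsto_sandwich[of "\<lambda>n. 1 - ln (real q) / ln (real n)" _ _ "\<lambda>n. 1 + ln (real N) / ln (real n)"])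
  have "1 - ln (real q) / ln (real n) \<le> ln (real (a n)) / ln (real n) \<and>
        ln (real (a n)) / ln (real n) \<le> 1 + ln (real N) / ln (real n)"
    if n: "n \<ge> 2" and lower: "n \<le> q * a n" and upper: "a n \<le> N * n" for n
  proof -
    have "q * a n \<noteq> 0"
      using n lower by linarith
    then have "q \<ge> 1" "a n \<ge> 1"
      by simp_all
    then have "N \<ge> 1"
      using upper by (cases N) simp_all
    have L: "ln (real n) > 0"
      using n by simp
    have "real n \<le> real q * real (a n)" "real (a n) \<le> real N * real n"
      using lower upper by (metis of_nat_le_iff of_nat_mult)+
    then have "ln (real n) \<le> ln (real q * real (a n))" "ln (real (a n)) \<le> ln (real N * real n)"
      using n \<open>a n \<ge> 1\<close> by simp_all
    then have "ln (real n) - ln (real q) \<le> ln (real (a n))" "ln (real (a n)) \<le> ln (real N) + ln (real n)"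
      using n \<open>q \<ge> 1\<close> \<open>a n \<ge> 1\<close> \<open>N \<ge> 1\<close> by (simp_all add: ln_mult)
    then have "(ln (real n) - ln (real q)) / ln (real n) \<le> ln (real (a n)) / ln (real n)"
      "ln (real (a n)) / ln (real n) \<le> (ln (real N) + ln (real n)) / ln (real n)"
      using L by (simp_all add: divide_right_mono)
    then show ?thesis
      using L by (simp add: diff_divide_distrib add_divide_distrib)
  qed
  then show "\<forall>\<^sub>F n in sequentially. 1 - ln (real q) / ln (real n) \<le> ln (real (a n)) / ln (real n)"
    "\<forall>\<^sub>F n in sequentially. ln (real (a n)) / ln (real n) \<le> 1 + ln (real N) / ln (real n)"
    using eventually_conj[OF assms eventually_ge_at_top[of 2]] by (auto elim!: eventually_mono)
qed real_asymp+


definition real_limsup :: "(nat \<Rightarrow> real) \<Rightarrow> real" where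
  "real_limsup a = real_of_ereal (limsup (\<lambda>k. ereal (a k)))"

lemma limsup_ereal_bounds:
  fixes a :: "nat \<Rightarrow> real"
  assumes "\<And>k. L \<le> a k" "\<And>k. a k \<le> U"
  shows "ereal L \<le> limsup (\<lambda>k. ereal (a k))" "limsup (\<lambda>k. ereal (a k)) \<le> ereal U"
proof -
  have "ereal L \<le> liminf (\<lambda>k. ereal (a k))"
    using assms by (intro Liminf_bounded) auto
  also have "\<dots> \<le> limsup (\<lambda>k. ereal (a k))"
    by (rule Liminf_le_Limsup) simp
  finally show "ereal L \<le> limsup (\<lambda>k. ereal (a k))" .
  show "limsup (\<lambda>k. ereal (a k)) \<le> ereal U"
    using assms by (intro Limsup_bounded) auto
qed

lemma ereal_real_limsup:
  assumes "\<And>k. \<bar>a k\<bar> \<le> B"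
  shows "ereal (real_limsup a) = limsup (\<lambda>k. ereal (a k))"
proof -
  have "- B \<le> a k" "a k \<le> B" for k
    using assms[of k] by linarith+
  then show ?thesis
    using limsup_ereal_bounds[of "- B" a B] unfolding real_limsup_def
    by (cases "limsup (\<lambda>k. ereal (a k))") simp_all
qed

lemma real_limsup_Suc: "real_limsup (\<lambda>k. a (Suc k)) = real_limsup a"
  unfolding real_limsup_def using limsup_shift[of "\<lambda>k. ereal (a k)"] by simp

lemma real_limsup_add_const:
  assumes "\<And>k. \<bar>a k\<bar> \<le> B"
  shows "real_limsup (\<lambda>k. a k + c) = real_limsup a + c"
proof -
  have "limsup (\<lambda>k. ereal (a k + c)) = limsup (\<lambda>k. ereal (a k)) + ereal c"
    using Limsup_add_ereal_right[of sequentially "ereal c" "\<lambda>k. ereal (a k)"] by simp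
  also have "\<dots> = ereal (real_limsup a + c)"
    by (simp flip: ereal_real_limsup[OF assms])
  finally show ?thesis
    unfolding real_limsup_def by simp
qed

lemma real_limsup_mono:
  assumes "\<And>k. a k \<le> b k" "\<And>k. \<bar>a k\<bar> \<le> B" "\<And>k. \<bar>b k\<bar> \<le> B"
  shows "real_limsup a \<le> real_limsup b"
proof -
  have "limsup (\<lambda>k. ereal (a k)) \<le> limsup (\<lambda>k. ereal (b k))"
    using assms(1) by (intro Limsup_mono) auto
  then show ?thesis
    by (simp flip: ereal_real_limsup[OF assms(2)] ereal_real_limsup[OF assms(3)])
qed

lemma continuous_on_mono_dense_range:
  fixes H :: "real \<Rightarrow> real"
  assumes mono: "mono H" and dense: "\<And>t e. e > 0 \<Longrightarrow> \<exists>x. \<bar>H x - t\<bar> < e"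
  shows "continuous_on UNIV H"
  unfolding continuous_on_iff
proof (intro ballI allI impI)
  fix x e :: real
  assume "e > 0"
  obtain a b where a: "\<bar>H a - (H x - e / 2)\<bar> < e / 2" and b: "\<bar>H b - (H x + e / 2)\<bar> < e / 2"
    using dense[of "e / 2"] \<open>e > 0\<close> by (meson half_gt_zero)
  have "H a < H x" "H x < H b"
    using a b unfolding abs_less_iff by linarith+
  then have "a < x" "x < b"
    using monoD[OF mono, of x a] monoD[OF mono, of b x] by (auto simp: not_less[symmetric])
  have "dist (H y) (H x) < e" if "dist y x < min (x - a) (b - x)" for y
  proof -
    have "a \<le> y" "y \<le> b"
      using that by (auto simp: dist_real_def)
    then show ?thesis
      using a b monoD[OF mono, of a y] monoD[OF mono, of y b] unfolding dist_real_def abs_less_iff by linarith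
  qed
  then show "\<exists>d>0. \<forall>y\<in>UNIV. dist y x < d \<longrightarrow> dist (H y) (H x) < e"
    using \<open>a < x\<close> \<open>x < b\<close> by (intro exI[of _ "min (x - a) (b - x)"]) auto
qed

section \<open>Lifts of orientation-preserving circle homeomorphisms\<close>

lemma strict_mono_funpow: "strict_mono (G :: 'a::order \<Rightarrow> 'a) \<Longrightarrow> strict_mono (G ^^ k)"
  by (induction k) (auto simp: strict_mono_def)

lemma continuous_on_funpow: "continuous_on UNIV (G :: 'a::topological_space \<Rightarrow> 'a) \<Longrightarrow> continuous_on UNIV (G ^^ k)"
proof (induction k)
  case (Suc k)
  then have "continuous_on UNIV (G \<circ> (G ^^ k))"
    by (intro continuous_on_compose) (auto intro: continuous_on_subset)
  then show ?case
    by simp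
qed (simp add: continuous_on_id)

text \<open>The slope is squeezed between the super-additive sequence \<open>a n - 1\<close> and the sub-additive
  sequence \<open>a n + 1\<close>.\<close>
lemma almost_additive_near_linear:
  fixes a :: "nat \<Rightarrow> real"
  assumes almost_add: "\<And>m n. \<bar>a (m + n) - a m - a n\<bar> \<le> 1"
  shows "\<exists>\<rho>. \<forall>n. \<bar>a n - real n * \<rho>\<bar> \<le> 1"
proof -
  have lower: "real k * (a n - 1) \<le> a (n * k) - 1" if "k \<ge> 1" for n k
    using that
  proof (induction k rule: dec_induct)
    case (step k)
    then show ?case
      using almost_add[of "n * k" n] by (simp add: algebra_simps)
  qed simp
  have upper: "a (n * k) + 1 \<le> real n * (a k + 1)" if "n \<ge> 1" for n k
    using that
  proof (induction n rule: dec_induct)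
    case (step n)
    then show ?case
      using almost_add[of "n * k" k] by (simp add: algebra_simps)
  qed simp
  have ratio: "(a n - 1) / real n \<le> (a k + 1) / real k" if "n \<ge> 1" "k \<ge> 1" for n k
  proof -
    have "real k * (a n - 1) \<le> real n * (a k + 1)"
      using lower[OF that(2), of n] upper[OF that(1), of k] by (simp add: mult.commute)
    then show ?thesis
      using that by (simp add: field_simps)
  qed
  define \<rho> where "\<rho> = (SUP n\<in>{1..}. (a n - 1) / real n)"
  have bdd: "bdd_above ((\<lambda>n. (a n - 1) / real n) ` {1..})"
    using ratio[of _ 1] by (auto intro!: bdd_aboveI[of _ "a 1 + 1"])
  have "\<bar>a n - real n * \<rho>\<bar> \<le> 1" for n
  proof (cases "n = 0")
    case True
    then show ?thesis
      using almost_add[of 0 0] by simp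
  next
    case False
    have "(a n - 1) / real n \<le> \<rho>"
      unfolding \<rho>_def using False by (intro cSUP_upper[OF _ bdd]) simp
    moreover have "\<rho> \<le> (a n + 1) / real n"
      unfolding \<rho>_def using False ratio by (intro cSUP_least) auto
    ultimately show ?thesis
      using False by (simp add: field_simps abs_le_iff)
  qed
  then show ?thesis
    by blast
qed

locale circle_lift =
  fixes F :: "real \<Rightarrow> real"
  assumes continuous_F: "continuous_on UNIV F"
    and strict_mono_F: "strict_mono F"
    and F_add_1: "\<And>x. F (x + 1) = F x + 1"
begin

lemma F_add_of_int: "F (x + of_int m) = F x + of_int m"
proof (induction m arbitrary: x rule: int_induct[where k = 0])
  case (step1 i)
  then show ?case
    using F_add_1[of "x + of_int i"] by (simp add: add.assoc)
next
  case (step2 i)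
  then show ?case
    using F_add_1[of "x + of_int (i - 1)"] by (simp add: algebra_simps)
qed simp

lemma funpow_add_of_int: "(F ^^ k) (x + of_int m) = (F ^^ k) x + of_int m"
  by (induction k arbitrary: x) (simp_all add: F_add_of_int)

lemma funpow_add_1: "(F ^^ k) (x + 1) = (F ^^ k) x + 1"
  using funpow_add_of_int[of k x 1] by simp

lemma funpow_less_iff [simp]: "(F ^^ k) x < (F ^^ k) y \<longleftrightarrow> x < y"
  using strict_mono_funpow[OF strict_mono_F] by (rule strict_mono_less)

lemma funpow_le_iff [simp]: "(F ^^ k) x \<le> (F ^^ k) y \<longleftrightarrow> x \<le> y"
  using strict_mono_funpow[OF strict_mono_F] by (rule strict_mono_less_eq)

lemma funpow_circle_lift: "circle_lift (F ^^ k)"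
  by unfold_locales
    (simp_all add: continuous_on_funpow[OF continuous_F] strict_mono_funpow[OF strict_mono_F] funpow_add_1)

lemma add_of_int_circle_lift: "circle_lift (\<lambda>x. F x + of_int p)"
  by unfold_locales (auto intro!: continuous_intros continuous_F simp: strict_mono_def F_add_1 strict_monoD[OF strict_mono_F])

lemma reflect_circle_lift: "circle_lift (\<lambda>x. - F (- x))"
proof unfold_locales
  show "continuous_on UNIV (\<lambda>x. - F (- x))"
    by (intro continuous_intros continuous_on_compose2[OF continuous_F]) auto
  show "strict_mono (\<lambda>x. - F (- x))"
    by (simp add: strict_mono_def strict_monoD[OF strict_mono_F])
  show "- F (- (x + 1)) = - F (- x) + 1" for x
    using F_add_of_int[of "- x" "- 1"] by simp
qed

lemma funpow_add_const: "((\<lambda>x. F x + of_int p) ^^ k) x = (F ^^ k) x + of_int (int k * p)"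
proof (induction k)
  case (Suc k)
  then show ?case
    by (simp only: funpow.simps comp_apply F_add_of_int) (simp add: algebra_simps)
qed simp

lemma surj_F: "surj F"
proof -
  have "\<exists>x. F x = y" for y
  proof -
    define m where "m = \<lfloor>y - F 0\<rfloor>"
    have "F (of_int m) \<le> y" "y \<le> F (of_int m + 1)"
      using F_add_of_int[of 0 m] F_add_of_int[of 1 m] F_add_1[of 0] unfolding m_def by (simp_all add: add.commute) linarith+
    then show ?thesis
      using IVT'[of F "of_int m" y "of_int m + 1"] continuous_on_subset[OF continuous_F] by auto
  qed
  then show ?thesis
    by (metis surjI)
qed

text \<open>Shift \<open>y\<close> by an integer into \<open>[x, x + 1[\<close>; monotonicity then traps \<open>F^n y\<close> in
  \<open>[F^n x, F^n x + 1[\<close>.\<close>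
lemma displacement_diff_less_1: "\<bar>((F ^^ n) y - y) - ((F ^^ n) x - x)\<bar> < 1"
proof -
  define y' where "y' = y - of_int \<lfloor>y - x\<rfloor>"
  have y': "x \<le> y'" "y' < x + 1"
    unfolding y'_def by linarith+
  have "(F ^^ n) y - y = (F ^^ n) y' - y'"
    using funpow_add_of_int[of n y' "\<lfloor>y - x\<rfloor>"] unfolding y'_def by simp
  moreover have "(F ^^ n) x \<le> (F ^^ n) y'" "(F ^^ n) y' < (F ^^ n) x + 1"
    using y' funpow_add_1[of n x] by (simp_all flip: funpow_add_1)
  ultimately show ?thesis
    using y' by linarith
qed

lemma rotation_number_exists: "\<exists>\<rho>. \<forall>n x. \<bar>(F ^^ n) x - x - real n * \<rho>\<bar> < 2"
proof -
  define a where "a n = (F ^^ n) 0" for n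
  have "\<bar>a (m + n) - a m - a n\<bar> \<le> 1" for m n
    using displacement_diff_less_1[of m "a n" 0] unfolding a_def by (simp add: funpow_add)
  then obtain \<rho> where \<rho>: "\<And>n. \<bar>a n - real n * \<rho>\<bar> \<le> 1"
    using almost_additive_near_linear by blast
  have "\<bar>(F ^^ n) x - x - real n * \<rho>\<bar> < 2" for n x
    using displacement_diff_less_1[of n x 0] \<rho>[of n] unfolding a_def by linarith
  then show ?thesis
    by blast
qed

end

section \<open>Wandering intervals\<close>

text \<open>The projection of \<open>]u, v[\<close> to the circle is disjoint from all its images under the
  circle map induced by \<open>G\<close>.\<close>
definition wandering_interval :: "(real \<Rightarrow> real) \<Rightarrow> real \<Rightarrow> real \<Rightarrow> bool" where
  "wandering_interval G u v \<longleftrightarrow> u < v \<and>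
     (\<forall>k\<ge>1. \<forall>s\<in>{u<..<v}. \<forall>t\<in>{u<..<v}. \<forall>m::int. (G ^^ k) s \<noteq> t + of_int m)"

lemma funpow_reflect:
  fixes G :: "real \<Rightarrow> real"
  shows "((\<lambda>x. - G (- x)) ^^ k) x = - (G ^^ k) (- x)"
  by (induction k) simp_all

lemma wandering_interval_reflect:
  fixes G :: "real \<Rightarrow> real"
  assumes "wandering_interval (\<lambda>x. - G (- x)) u v"
  shows "wandering_interval G (- v) (- u)"
  unfolding wandering_interval_def
proof (intro conjI allI impI ballI)
  show "- v < - u"
    using assms unfolding wandering_interval_def by simp
  fix k :: nat and s t :: real and m :: int
  assume "k \<ge> 1" "s \<in> {- v<..<- u}" "t \<in> {- v<..<- u}"
  moreover have "- s \<in> {u<..<v}" "- t \<in> {u<..<v}"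
    using calculation by auto
  ultimately have "((\<lambda>x. - G (- x)) ^^ k) (- s) \<noteq> - t + of_int (- m)"
    using assms unfolding wandering_interval_def by blast
  then show "(G ^^ k) s \<noteq> t + of_int m"
    by (auto simp: funpow_reflect)
qed

context circle_lift
begin

lemma wandering_interval_add_const:
  assumes "wandering_interval (\<lambda>x. F x + of_int p) u v"
  shows "wandering_interval F u v"
  unfolding wandering_interval_def
proof (intro conjI allI impI ballI)
  show "u < v"
    using assms unfolding wandering_interval_def by simp
  fix k :: nat and s t :: real and m :: int
  assume "k \<ge> 1" "s \<in> {u<..<v}" "t \<in> {u<..<v}"
  then have "((\<lambda>x. F x + of_int p) ^^ k) s \<noteq> t + of_int (m + int k * p)"
    using assms unfolding wandering_interval_def by blast
  then show "(F ^^ k) s \<noteq> t + of_int m"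
    by (simp add: funpow_add_const)
qed

lemma incseq_orbit:
  assumes "z \<le> F z"
  shows "incseq (\<lambda>k. (F ^^ k) z)"
proof (rule incseq_SucI)
  fix k
  have "(F ^^ k) z \<le> (F ^^ k) (F z)"
    using assms by simp
  then show "(F ^^ k) z \<le> (F ^^ Suc k) z"
    by (simp only: funpow_Suc_right comp_apply)
qed

text \<open>A bounded increasing orbit converges to a fixed point, which can be moved into \<open>[z, z + 1[\<close>.\<close>
lemma fixed_point_above:
  assumes "z < F z" and bounded: "\<And>k. (F ^^ k) z \<le> B"
  obtains w where "z \<le> w" "w < z + 1" "F w = w"
proof -
  obtain L where L: "(\<lambda>k. (F ^^ k) z) \<longlonglongrightarrow> L" "\<And>k. (F ^^ k) z \<le> L"
    using incseq_convergent[OF incseq_orbit, of z B] assms by (auto simp: less_imp_le)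
  have "(\<lambda>k. F ((F ^^ k) z)) \<longlonglongrightarrow> F L"
    using continuous_F by (intro isCont_tendsto_compose[OF _ L(1)]) (simp add: continuous_on_eq_continuous_at)
  moreover have "(\<lambda>k. F ((F ^^ k) z)) \<longlonglongrightarrow> L"
    using LIMSEQ_Suc[OF L(1)] by simp
  ultimately have "F L = L"
    by (rule LIMSEQ_unique)
  define w where "w = L + of_int (- \<lfloor>L - z\<rfloor>)"
  have "F w = w"
    unfolding w_def by (simp only: F_add_of_int \<open>F L = L\<close>)
  moreover have "z \<le> w" "w < z + 1"
    unfolding w_def by linarith+
  ultimately show ?thesis
    using that by blast
qed

text \<open>For \<open>k \<ge> 1\<close> the image \<open>F^k ]z, F z[\<close> lies in \<open>]F z, w[\<close>, where \<open>w < z + 1\<close> is a fixed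
  point, and so strictly between \<open>t\<close> and \<open>t + 1\<close> for every \<open>t \<in> ]z, F z[\<close>.\<close>
lemma wandering_interval_above:
  assumes "z < F z" and "\<And>k. (F ^^ k) z \<le> B"
  shows "wandering_interval F z (F z)"
  unfolding wandering_interval_def
proof (intro conjI allI impI ballI)
  obtain w where w: "z \<le> w" "w < z + 1" "F w = w"
    using fixed_point_above assms by blast
  have fixed: "(F ^^ k) w = w" for k
    by (induction k) (simp_all add: w(3))
  fix k :: nat and s t :: real and m :: int
  assume k: "k \<ge> 1" and s: "s \<in> {z<..<F z}" and t: "t \<in> {z<..<F z}"
  have "(F ^^ 1) z \<le> (F ^^ k) z"
    using incseqD[OF incseq_orbit k] assms(1) by simp
  also have "(F ^^ k) z < (F ^^ k) s"
    using s by simp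
  finally have lower: "t < (F ^^ k) s"
    using t by simp
  have "F z \<le> F w"
    using w(1) strict_mono_less_eq[OF strict_mono_F] by blast
  then have "(F ^^ k) s < (F ^^ k) w"
    using s w(3) by simp
  then have upper: "(F ^^ k) s < t + 1"
    using fixed w t by simp
  show "(F ^^ k) s \<noteq> t + of_int m"
  proof
    assume "(F ^^ k) s = t + of_int m"
    then have "0 < m" "m < 1"
      using lower upper by simp_all
    then show False
      by simp
  qed
qed (use assms in simp)

lemma wandering_interval_of_nonfixed:
  assumes "F z \<noteq> z" and bounded: "\<And>k. \<bar>(F ^^ k) z - z\<bar> \<le> B"
  shows "\<exists>u v. wandering_interval F u v"
proof (cases "z < F z")
  case True
  have "(F ^^ k) z \<le> z + B" for k
    using bounded[of k] by linarith
  then have "wandering_interval F z (F z)"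
    using True by (rule wandering_interval_above[rotated])
  then show ?thesis
    by blast
next
  case False
  interpret reflected: circle_lift "\<lambda>x. - F (- x)"
    by (rule reflect_circle_lift)
  have "((\<lambda>x. - F (- x)) ^^ k) (- z) \<le> - z + B" for k
    using bounded[of k] by (simp add: funpow_reflect)
  moreover have "- z < - F (- (- z))"
    using False assms(1) by simp
  ultimately have "wandering_interval (\<lambda>x. - F (- x)) (- z) (- F (- (- z)))"
    by (intro reflected.wandering_interval_above)
  then show ?thesis
    using wandering_interval_reflect by fastforce
qed

end

section \<open>Conjugacy to a translation or a wandering interval\<close>

definition conjugate_to_translation :: "(real \<Rightarrow> real) \<Rightarrow> bool" where
  "conjugate_to_translation F \<longleftrightarrow> (\<exists>H \<rho>. circle_lift H \<and> (\<forall>x. H (F x) = H x + \<rho>))"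

context circle_lift
begin

text \<open>If \<open>F^q\<close> is the translation by \<open>p\<close>, averaging \<open>x \<mapsto> F^i x - i p / q\<close> over a period
  conjugates \<open>F\<close> to the translation by \<open>p / q\<close>.\<close>
lemma conjugate_to_translation_if_periodic:
  assumes q: "q \<ge> 1" and periodic: "\<And>x. (F ^^ q) x = x + of_int p"
  shows "conjugate_to_translation F"
proof -
  define \<rho> where "\<rho> = of_int p / real q"
  define H where "H x = (\<Sum>i<q. (F ^^ i) x - real i * \<rho>) / real q" for x
  have "circle_lift H"
  proof unfold_locales
    show "continuous_on UNIV H"
      unfolding H_def by (intro continuous_intros continuous_on_funpow continuous_F) (use q in auto)
    show "strict_mono H"
    proof (rule strict_monoI)
      fix x y :: real
      assume "x < y"
      then have "(\<Sum>i<q. (F ^^ i) x - real i * \<rho>) < (\<Sum>i<q. (F ^^ i) y - real i * \<rho>)"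
        using q by (intro sum_strict_mono) (auto simp: lessThan_empty_iff)
      then show "H x < H y"
        unfolding H_def using q by (simp add: divide_strict_right_mono)
    qed
    show "H (x + 1) = H x + 1" for x
    proof -
      have "(\<Sum>i<q. (F ^^ i) (x + 1) - real i * \<rho>) = (\<Sum>i<q. ((F ^^ i) x - real i * \<rho>) + 1)"
        by (intro sum.cong refl) (simp add: funpow_add_1)
      also have "\<dots> = (\<Sum>i<q. (F ^^ i) x - real i * \<rho>) + real q"
        by (simp add: sum.distrib)
      finally have "(\<Sum>i<q. (F ^^ i) (x + 1) - real i * \<rho>) = (\<Sum>i<q. (F ^^ i) x - real i * \<rho>) + real q" .
      then show ?thesis
        unfolding H_def using q by (simp add: field_simps)
    qed
  qed
  moreover have "H (F x) = H x + \<rho>" for x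
  proof -
    define a where "a i = (F ^^ i) x - real i * \<rho>" for i
    have "(\<Sum>i<q. (F ^^ i) (F x) - real i * \<rho>) = (\<Sum>i<q. a (Suc i) + \<rho>)"
      by (intro sum.cong refl) (simp add: a_def funpow_swap1 algebra_simps)
    also have "\<dots> = (\<Sum>i<q. a (Suc i)) + real q * \<rho>"
      by (simp add: sum.distrib)
    also have "(\<Sum>i<q. a (Suc i)) = (\<Sum>i<q. a i)"
      using sum.lessThan_Suc_shift[of a q] periodic[of x] q by (simp add: a_def \<rho>_def)
    finally show ?thesis
      unfolding H_def a_def using q by (simp add: field_simps)
  qed
  ultimately show ?thesis
    unfolding conjugate_to_translation_def by blast
qed

text \<open>For rational rotation number \<open>p / q\<close>, the lift \<open>G = F^q - p\<close> has bounded orbits; either it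
  is the identity or a point it moves spans a wandering interval.\<close>
lemma rational_rotation_dichotomy:
  assumes \<rho>: "\<And>n x. \<bar>(F ^^ n) x - x - real n * \<rho>\<bar> < 2" and q: "q \<ge> 1" and p: "real q * \<rho> = of_int p"
  shows "conjugate_to_translation F \<or> (\<exists>u v. wandering_interval (F ^^ q) u v)"
proof -
  interpret Fq: circle_lift "F ^^ q"
    by (rule funpow_circle_lift)
  define G where "G x = (F ^^ q) x + of_int (- p)" for x
  interpret G: circle_lift G
    unfolding G_def by (rule Fq.add_of_int_circle_lift)
  have "(G ^^ k) x = (F ^^ (q * k)) x - real (q * k) * \<rho>" for k x
    unfolding G_def Fq.funpow_add_const funpow_mult using p by (simp add: algebra_simps)
  then have bounded: "\<bar>(G ^^ k) x - x\<bar> \<le> 2" for k x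
    using \<rho>[of "q * k" x] by simp
  show ?thesis
  proof (cases "\<forall>x. G x = x")
    case True
    then have "(F ^^ q) x = x + of_int p" for x
      unfolding G_def by (metis add_diff_cancel_right' diff_minus_eq_add of_int_minus)
    then show ?thesis
      using conjugate_to_translation_if_periodic q by blast
  next
    case False
    then obtain z where "G z \<noteq> z"
      by blast
    then obtain u v where "wandering_interval G u v"
      using G.wandering_interval_of_nonfixed bounded by blast
    then show ?thesis
      unfolding G_def using Fq.wandering_interval_add_const by blast
  qed
qed

text \<open>The range of \<open>H\<close> contains \<open>H 0 + k \<rho> - h\<close> for all \<open>k > 0\<close> and \<open>h\<close>, which are dense by
  Kronecker's theorem.\<close>
lemma dense_range_if_semiconjugate:
  fixes \<rho> :: real
  assumes irrational: "\<rho> \<notin> \<rat>" and H_add_of_int: "\<And>x m. H (x + of_int m) = H x + of_int m"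
    and H_F: "\<And>x. H (F x) = H x + \<rho>" and "e > 0"
  shows "\<exists>x. \<bar>H x - t\<bar> < e"
proof -
  have H_funpow: "H ((F ^^ n) x) = H x + real n * \<rho>" for n x
    by (induction n) (simp_all add: H_F algebra_simps)
  obtain h k :: int where "k > 0" and hk: "\<bar>of_int k * \<rho> - of_int h - (t - H 0)\<bar> < e"
    using sequence_of_fractional_parts_is_dense[OF irrational \<open>e > 0\<close>] by metis
  have "H ((F ^^ nat k) 0 + of_int (- h)) = H 0 + of_int k * \<rho> - of_int h"
    using \<open>k > 0\<close> by (simp only: H_add_of_int H_funpow) simp
  then show ?thesis
    using hk by (intro exI[of _ "(F ^^ nat k) 0 + of_int (- h)"]) (simp add: algebra_simps abs_minus_commute)
qed

text \<open>The semiconjugacy is \<open>H x = limsup (F^k x - k \<rho>)\<close>; a dense range rules out jumps of the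
  monotone map \<open>H\<close>.\<close>
lemma semiconjugate_to_irrational_translation:
  assumes \<rho>: "\<And>n x. \<bar>(F ^^ n) x - x - real n * \<rho>\<bar> < 2" and irrational: "\<rho> \<notin> \<rat>"
  obtains H where "mono H" "continuous_on UNIV H" "\<And>x m. H (x + of_int m) = H x + of_int m"
    "\<And>x. H (F x) = H x + \<rho>"
proof -
  define H where "H x = real_limsup (\<lambda>k. (F ^^ k) x - real k * \<rho>)" for x
  have bounded: "\<bar>(F ^^ k) x - real k * \<rho>\<bar> \<le> \<bar>x\<bar> + 2" for k x
    using \<rho>[of k x] by linarith
  have H_F: "H (F x) = H x + \<rho>" for x
  proof -
    have "H (F x) = real_limsup (\<lambda>k. ((F ^^ Suc k) x - real (Suc k) * \<rho>) + \<rho>)"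
      unfolding H_def by (simp add: funpow_swap1 algebra_simps)
    also have "\<dots> = real_limsup (\<lambda>k. (F ^^ Suc k) x - real (Suc k) * \<rho>) + \<rho>"
      using bounded by (rule real_limsup_add_const)
    also have "\<dots> = H x + \<rho>"
      unfolding H_def by (simp only: real_limsup_Suc[of "\<lambda>k. (F ^^ k) x - real k * \<rho>"])
    finally show ?thesis .
  qed
  have H_add_of_int: "H (x + of_int m) = H x + of_int m" for x m
  proof -
    have "H (x + of_int m) = real_limsup (\<lambda>k. ((F ^^ k) x - real k * \<rho>) + of_int m)"
      unfolding H_def by (simp add: funpow_add_of_int algebra_simps)
    also have "\<dots> = H x + of_int m"
      unfolding H_def using bounded by (rule real_limsup_add_const)
    finally show ?thesis .
  qed
  have "mono H"
  proof (rule monoI)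
    fix x y :: real
    assume "x \<le> y"
    have "\<bar>(F ^^ k) z - real k * \<rho>\<bar> \<le> \<bar>x\<bar> + \<bar>y\<bar> + 2" if "z \<in> {x, y}" for k z
      using bounded[of k z] that by auto
    then show "H x \<le> H y"
      unfolding H_def using \<open>x \<le> y\<close> by (intro real_limsup_mono) auto
  qed
  have "continuous_on UNIV H"
    using continuous_on_mono_dense_range[OF \<open>mono H\<close>] dense_range_if_semiconjugate[OF irrational]
      H_add_of_int H_F by blast
  then show ?thesis
    using that \<open>mono H\<close> H_add_of_int H_F by blast
qed

text \<open>\<open>F^k s = t + m\<close> inside an interval where \<open>H\<close> is constant would force \<open>k \<rho> = m\<close>.\<close>
lemma wandering_interval_if_semiconjugacy_flat:
  fixes \<rho> :: real
  assumes irrational: "\<rho> \<notin> \<rat>" and "u < v" and flat: "\<And>s. s \<in> {u<..<v} \<Longrightarrow> H s = c"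
    and H_add_of_int: "\<And>x m. H (x + of_int m) = H x + of_int m" and H_F: "\<And>x. H (F x) = H x + \<rho>"
  shows "wandering_interval F u v"
  unfolding wandering_interval_def
proof (intro conjI allI impI ballI)
  have H_funpow: "H ((F ^^ k) s) = H s + real k * \<rho>" for k s
    by (induction k) (simp_all add: H_F algebra_simps)
  fix k :: nat and s t :: real and m :: int
  assume k: "k \<ge> 1" and s: "s \<in> {u<..<v}" and t: "t \<in> {u<..<v}"
  show "(F ^^ k) s \<noteq> t + of_int m"
  proof
    assume "(F ^^ k) s = t + of_int m"
    then have "real k * \<rho> = of_int m"
      using H_funpow[of k s] H_add_of_int[of t m] flat[OF s] flat[OF t] by simp
    then have "\<rho> = of_int m / of_nat k"
      using k by (simp add: field_simps)
    then show False
      using irrational by simp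
  qed
qed (rule \<open>u < v\<close>)

lemma irrational_rotation_dichotomy:
  assumes \<rho>: "\<And>n x. \<bar>(F ^^ n) x - x - real n * \<rho>\<bar> < 2" and irrational: "\<rho> \<notin> \<rat>"
  shows "conjugate_to_translation F \<or> (\<exists>u v. wandering_interval F u v)"
proof -
  obtain H where "mono H" "continuous_on UNIV H" and H_add_of_int: "\<And>x m. H (x + of_int m) = H x + of_int m"
    and H_F: "\<And>x. H (F x) = H x + \<rho>"
    using semiconjugate_to_irrational_translation[OF assms] by blast
  show ?thesis
  proof (cases "strict_mono H")
    case True
    have "circle_lift H"
      using True \<open>continuous_on UNIV H\<close> H_add_of_int[of _ 1] by unfold_locales simp_all
    then show ?thesis
      unfolding conjugate_to_translation_def using H_F by blast
  next
    case False
    then obtain u v where "u < v" "H u = H v"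
      using \<open>mono H\<close> unfolding strict_mono_def mono_def by (metis order_less_le)
    then have "H s = H u" if "s \<in> {u<..<v}" for s
      using that monoD[OF \<open>mono H\<close>, of u s] monoD[OF \<open>mono H\<close>, of s v] by auto
    then have "wandering_interval F u v"
      using wandering_interval_if_semiconjugacy_flat[OF irrational \<open>u < v\<close>] H_add_of_int H_F by blast
    then show ?thesis
      by blast
  qed
qed

lemma rotation_dichotomy:
  "conjugate_to_translation F \<or> (\<exists>q u v. q \<ge> 1 \<and> wandering_interval (F ^^ q) u v)"
proof -
  obtain \<rho> where \<rho>: "\<And>n x. \<bar>(F ^^ n) x - x - real n * \<rho>\<bar> < 2"
    using rotation_number_exists by blast
  show ?thesis
  proof (cases "\<rho> \<in> \<rat>")
    case True
    then obtain p q where "q > 0" "\<rho> = of_int p / of_int q"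
      by (metis Rats_cases')
    then have "real (nat q) * \<rho> = of_int p" "nat q \<ge> 1"
      by simp_all
    then show ?thesis
      using rational_rotation_dichotomy[OF \<rho>] by blast
  next
    case False
    have "F ^^ 1 = F"
      by simp
    then show ?thesis
      using irrational_rotation_dichotomy[OF \<rho> False] by (metis order_refl)
  qed
qed

end

context circle_lift
begin

lemma circle_map_F_circ_proj: "circle_map F (circ_proj x) = circ_proj (F x)"
  using F_add_of_int by (rule circle_map_circ_proj)

lemma funpow_circle_map_F: "(circle_map F ^^ k) (circ_proj x) = circ_proj ((F ^^ k) x)"
  using F_add_of_int by (rule funpow_circle_map)

lemma homeomorphism_circle_map:
  obtains g where "homeomorphism UNIV UNIV (circle_map F) g"
proof -
  have "inj (circle_map F)"
  proof (rule injI)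
    fix a b
    assume eq: "circle_map F a = circle_map F b"
    obtain x y where a: "a = circ_proj x" and b: "b = circ_proj y"
      by (metis circ_proj_cases)
    obtain m where "F x = F y + of_int m"
      using eq circ_proj_eq_iff unfolding a b circle_map_F_circ_proj by blast
    then have "x = y + of_int m"
      using strict_mono_eq[OF strict_mono_F] by (simp flip: F_add_of_int)
    then show "a = b"
      unfolding a b by simp
  qed
  moreover have "c \<in> range (circle_map F)" for c
  proof -
    obtain t where c: "c = circ_proj t"
      by (rule circ_proj_cases)
    obtain x where "F x = t"
      using surj_F by (metis surjD)
    then show ?thesis
      unfolding c by (metis circle_map_F_circ_proj rangeI)
  qed
  then have "circle_map F ` UNIV = UNIV"
    by blast
  ultimately show ?thesis
    using homeomorphism_compact[OF compact_UNIV_circle continuous_on_circle_map[OF continuous_F F_add_of_int]]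
      that by blast
qed

lemma conjugate_to_rotation_if_conjugate_to_translation:
  assumes "conjugate_to_translation F"
  shows "\<exists>g. is_rotation g \<and> top_conjugate (circle_map F) g"
proof -
  obtain H \<rho> where "circle_lift H" and H_F: "\<And>x. H (F x) = H x + \<rho>"
    using assms unfolding conjugate_to_translation_def by blast
  interpret H: circle_lift H
    by fact
  define g where "g = circle_map (\<lambda>x. x + \<rho>)"
  have g: "g (circ_proj x) = circ_proj (x + \<rho>)" for x
    unfolding g_def by (rule circle_map_circ_proj) simp
  obtain h' where "homeomorphism UNIV UNIV (circle_map H) h'"
    by (rule H.homeomorphism_circle_map)
  moreover have "circle_map H \<circ> circle_map F = g \<circ> circle_map H"
  proof
    fix c
    obtain x where "c = circ_proj x"
      by (rule circ_proj_cases)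
    then show "(circle_map H \<circ> circle_map F) c = (g \<circ> circle_map H) c"
      by (simp add: circle_map_F_circ_proj H.circle_map_F_circ_proj g H_F)
  qed
  ultimately show ?thesis
    unfolding is_rotation_def top_conjugate_def using g by blast
qed

end

lemma dist_rotation:
  assumes "is_rotation g"
  shows "dist (g x) (g y) = dist x y"
proof -
  obtain a where g: "\<And>x. g (circ_proj x) = circ_proj (x + a)"
    using assms unfolding is_rotation_def by blast
  obtain x' y' where "x = circ_proj x'" "y = circ_proj y'"
    by (metis circ_proj_cases)
  then show ?thesis
    by (simp add: g dist_circ_proj_add)
qed

lemma dist_funpow_isometry:
  fixes g :: "'a::metric_space \<Rightarrow> 'a"
  assumes "\<And>x y. dist (g x) (g y) = dist x y"
  shows "dist ((g ^^ k) x) ((g ^^ k) y) = dist x y"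
  by (induction k) (simp_all add: assms)

lemma funpow_right_inverse:
  fixes f g :: "'a \<Rightarrow> 'a"
  assumes "\<And>z. f (g z) = z"
  shows "(f ^^ k) ((g ^^ k) z) = z"
proof (induction k arbitrary: z)
  case (Suc k)
  have "(f ^^ Suc k) ((g ^^ Suc k) z) = (f ^^ k) (f (g ((g ^^ k) z)))"
    by (simp add: funpow_swap1)
  then show ?case
    using Suc assms by simp
qed simp

lemma funpow_conj_inverse:
  assumes "h \<circ> f = g \<circ> h" "\<And>z. h' (h z) = z" "\<And>z. h (h' z) = z"
  shows "(f ^^ k) (h' z) = h' ((g ^^ k) z)"
proof -
  have "f (h' z) = h' (g z)" for z
    using fun_cong[OF assms(1), of "h' z"] assms(2)[of "f (h' z)"] assms(3)[of z] by simp
  then show ?thesis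
    by (induction k) simp_all
qed

text \<open>Dynamical balls of an isometry are ordinary balls; the uniformly continuous conjugacy turns a
  finite net of such balls into a cover by dynamical balls of every length.\<close>
lemma cover_num_bounded_if_conjugate_to_isometry:
  fixes f g :: "'a::metric_space \<Rightarrow> 'a"
  assumes compact: "compact (UNIV :: 'a set)" and conj: "top_conjugate f g"
    and isometry: "\<And>x y. dist (g x) (g y) = dist x y" and "e > 0"
  obtains K where "\<And>n. n \<ge> 1 \<Longrightarrow> cover_num f UNIV n e \<le> K"
proof -
  obtain h h' where hom: "homeomorphism UNIV UNIV h h'" and comm: "h \<circ> f = g \<circ> h"
    using conj unfolding top_conjugate_def by blast
  have h'_h: "h' (h z) = z" and h_h': "h (h' z) = z" for z
    using hom unfolding homeomorphism_def by auto
  note funpow_f_h' = funpow_conj_inverse[OF comm h'_h h_h']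
  have "uniformly_continuous_on UNIV h'"
    using compact hom unfolding homeomorphism_def by (blast intro: compact_uniformly_continuous)
  then obtain d where "d > 0" and d: "\<And>u v. dist u v < d \<Longrightarrow> dist (h' u) (h' v) < e"
    using \<open>e > 0\<close> unfolding uniformly_continuous_on_def by blast
  obtain D :: "'a set" where "finite D" and D: "UNIV \<subseteq> (\<Union>c\<in>D. ball c d)"
    by (rule compactE_image[OF compact, of UNIV "\<lambda>c. ball c d"]) (use \<open>d > 0\<close> in auto)
  have "cover_num f UNIV n e \<le> card (h' ` D)" if "n \<ge> 1" for n
  proof (rule cover_num_le_card)
    show "finite (h' ` D)"
      using \<open>finite D\<close> by simp
    show "UNIV \<subseteq> (\<Union>c\<in>h' ` D. {y. dyn_dist f n c y < e})"
    proof
      fix y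
      have "h y \<in> (\<Union>c\<in>D. ball c d)"
        using D by blast
      then obtain c where "c \<in> D" "dist c (h y) < d"
        by (auto simp: mem_ball)
      have "dist ((f ^^ k) (h' c)) ((f ^^ k) y) < e" for k
      proof -
        have "dist ((g ^^ k) c) ((g ^^ k) (h y)) < d"
          using dist_funpow_isometry[OF isometry] \<open>dist c (h y) < d\<close> by simp
        then have "dist (h' ((g ^^ k) c)) (h' ((g ^^ k) (h y))) < e"
          by (rule d)
        then show ?thesis
          using funpow_f_h'[of k c] funpow_f_h'[of k "h y"] h'_h[of y] by simp
      qed
      then show "y \<in> (\<Union>c\<in>h' ` D. {y. dyn_dist f n c y < e})"
        using \<open>c \<in> D\<close> dyn_dist_less_iff[OF that] by blast
    qed
  qed
  then show ?thesis
    using that by blast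
qed

section \<open>Linear bounds on covering numbers\<close>

definition grid_preimages :: "(real \<Rightarrow> real) \<Rightarrow> nat \<Rightarrow> real set" where
  "grid_preimages G N = {x \<in> {0..<1}. \<exists>j::int. G x = of_int j / real N}"

context circle_lift
begin

text \<open>\<open>F\<close> maps \<open>[0, 1[\<close> injectively into a half-open interval of length one, which contains
  exactly \<open>N\<close> points of the grid \<open>\<int> / N\<close>.\<close>
lemma grid_preimages_finite_card:
  assumes "N \<ge> 1"
  shows "finite (grid_preimages F N) \<and> card (grid_preimages F N) \<le> N"
proof -
  define c where "c = \<lceil>real N * F 0\<rceil>"
  define index where "index x = \<lfloor>real N * F x\<rfloor>" for x
  have index: "index x = j" if "F x = of_int j / real N" for x j
    using that assms by (simp add: index_def)
  have inj: "inj_on index (grid_preimages F N)"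
  proof (rule inj_onI)
    fix x y
    assume "x \<in> grid_preimages F N" "y \<in> grid_preimages F N" and eq: "index x = index y"
    then obtain i j where "F x = of_int i / real N" "F y = of_int j / real N"
      unfolding grid_preimages_def by blast
    then have "F x = F y"
      using eq index[of x i] index[of y j] by simp
    then show "x = y"
      using strict_mono_eq[OF strict_mono_F] by blast
  qed
  moreover have image: "index ` grid_preimages F N \<subseteq> {c..<c + int N}"
  proof
    fix i
    assume "i \<in> index ` grid_preimages F N"
    then obtain x j where x: "0 \<le> x" "x < 1" and j: "F x = of_int j / real N" and "i = j"
      unfolding grid_preimages_def using index by auto
    have "F 0 \<le> F x" "F x < F 0 + 1"
      using x F_add_1[of 0] strict_mono_less[OF strict_mono_F, of x 1] strict_mono_less_eq[OF strict_mono_F, of 0 x]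
      by simp_all
    then have "real N * F 0 \<le> real N * F x" "real N * F x < real N * (F 0 + 1)"
      using assms by (simp_all add: mult_left_mono)
    moreover have "of_int j = real N * F x"
      using j assms by simp
    ultimately have "real N * F 0 \<le> of_int j" "of_int j < real N * F 0 + real N"
      by (simp_all add: distrib_left)
    then show "i \<in> {c..<c + int N}"
      unfolding c_def \<open>i = j\<close> by (simp add: ceiling_le_iff) linarith
  qed
  ultimately have "finite (grid_preimages F N)"
    using finite_imageD[OF finite_subset[OF image]] by blast
  moreover have "card (grid_preimages F N) \<le> card {c..<c + int N}"
    using card_inj_on_le[OF inj image] by simp
  ultimately show ?thesis
    by simp
qed

lemma gap_less_if_no_grid_preimage:
  assumes "N \<ge> 1" "s \<le> x" and no_grid: "\<And>t j. s < t \<Longrightarrow> t \<le> x \<Longrightarrow> F t \<noteq> of_int j / real N"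
  shows "F x - F s < 1 / real N"
proof (rule ccontr)
  assume far: "\<not> ?thesis"
  define j where "j = \<lfloor>real N * F x\<rfloor>"
  have "of_int j \<le> real N * F x" "real N * F x - 1 < of_int j"
    unfolding j_def by linarith+
  moreover have "F x - 1 / real N = (real N * F x - 1) / real N"
    using assms(1) by (simp add: field_simps)
  ultimately have grid: "of_int j / real N \<le> F x" "F x - 1 / real N < of_int j / real N"
    using assms(1) by (simp_all add: pos_divide_le_eq divide_strict_right_mono mult.commute)
  then have "F s < of_int j / real N"
    using far by linarith
  then obtain t where "s \<le> t" "t \<le> x" "F t = of_int j / real N"
    using IVT'[of F s "of_int j / real N" x] grid(1) \<open>s \<le> x\<close> continuous_on_subset[OF continuous_F] by force
  moreover have "s \<noteq> t"
    using \<open>F s < of_int j / real N\<close> \<open>F t = of_int j / real N\<close> by auto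
  ultimately show False
    using no_grid by force
qed

text \<open>The largest point of \<open>S\<close> below \<open>x\<close> is followed by no grid preimage up to \<open>x\<close>.\<close>
lemma grid_predecessor_close:
  assumes N: "N \<ge> 1" and S: "finite S" "0 \<in> S" "S \<subseteq> {0..<1}"
    and grid: "\<And>k. k < n \<Longrightarrow> grid_preimages (F ^^ k) N \<subseteq> S" and x: "0 \<le> x" "x < 1"
  obtains s where "s \<in> S" "s \<le> x" "\<And>k. k < n \<Longrightarrow> (F ^^ k) x - (F ^^ k) s < 1 / real N"
proof -
  define T where "T = {t \<in> S. t \<le> x}"
  have "finite T" "0 \<in> T"
    unfolding T_def using S x by auto
  define s where "s = Max T"
  have "s \<in> T"
    unfolding s_def using \<open>finite T\<close> \<open>0 \<in> T\<close> by (intro Max_in) auto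
  then have "s \<in> S" "s \<le> x"
    unfolding T_def by simp_all
  have s_max: "t \<le> s" if "t \<in> S" "t \<le> x" for t
    unfolding s_def using \<open>finite T\<close> that by (intro Max_ge) (simp_all add: T_def)
  have "(F ^^ k) x - (F ^^ k) s < 1 / real N" if "k < n" for k
  proof (rule circle_lift.gap_less_if_no_grid_preimage[OF funpow_circle_lift N \<open>s \<le> x\<close>])
    fix t j
    assume "s < t" "t \<le> x"
    moreover have "0 \<le> t"
      using \<open>s \<in> S\<close> \<open>s < t\<close> S(3) by force
    ultimately have "t \<notin> grid_preimages (F ^^ k) N"
      using s_max[of t] grid[OF that] x by force
    then show "(F ^^ k) t \<noteq> of_int j / real N"
      using \<open>0 \<le> t\<close> \<open>t \<le> x\<close> x unfolding grid_preimages_def by auto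
  qed
  then show ?thesis
    using that \<open>s \<in> S\<close> \<open>s \<le> x\<close> by blast
qed

lemma linear_dyn_cover:
  assumes N: "N \<ge> 1" "1 / real N < e" and n: "n \<ge> 1"
  obtains C where "finite C" "card C \<le> N * n + 1"
    "UNIV \<subseteq> (\<Union>c\<in>C. {y. dyn_dist (circle_map F) n c y < e})"
proof -
  define S where "S = insert 0 (\<Union>k<n. grid_preimages (F ^^ k) N)"
  have grid: "finite (grid_preimages (F ^^ k) N) \<and> card (grid_preimages (F ^^ k) N) \<le> N" for k
    using circle_lift.grid_preimages_finite_card[OF funpow_circle_lift N(1)] .
  have "finite S"
    unfolding S_def using grid by simp
  have "0 \<in> S" "S \<subseteq> {0..<1}"
    unfolding S_def grid_preimages_def by auto
  have "card (\<Union>k<n. grid_preimages (F ^^ k) N) \<le> (\<Sum>k<n. card (grid_preimages (F ^^ k) N))"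
    by (rule card_UN_le) simp
  also have "\<dots> \<le> N * n"
    using grid sum_mono[of "{..<n}" "\<lambda>k. card (grid_preimages (F ^^ k) N)" "\<lambda>_. N"] by (simp add: mult.commute)
  moreover have "card S \<le> card (\<Union>k<n. grid_preimages (F ^^ k) N) + 1"
    unfolding S_def using grid by (simp add: card_insert_if)
  moreover have "card (circ_proj ` S) \<le> card S"
    using \<open>finite S\<close> by (rule card_image_le)
  ultimately have "card (circ_proj ` S) \<le> N * n + 1"
    by linarith
  moreover have "y \<in> (\<Union>c\<in>circ_proj ` S. {y. dyn_dist (circle_map F) n c y < e})" for y
  proof -
    obtain x where x: "0 \<le> x" "x < 1" "y = circ_proj x"
      using Rep_circle[of y] circ_proj_Rep_circle[of y] by auto
    have "\<And>k. k < n \<Longrightarrow> grid_preimages (F ^^ k) N \<subseteq> S"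
      unfolding S_def by blast
    then obtain s where "s \<in> S" "s \<le> x" and close: "\<And>k. k < n \<Longrightarrow> (F ^^ k) x - (F ^^ k) s < 1 / real N"
      using grid_predecessor_close[OF N(1) \<open>finite S\<close> \<open>0 \<in> S\<close> \<open>S \<subseteq> {0..<1}\<close> _ x(1,2)] by blast
    have "dist (circ_proj ((F ^^ k) s)) (circ_proj ((F ^^ k) x)) \<le> (F ^^ k) x - (F ^^ k) s" for k
      using dist_circ_proj_le_abs[of "(F ^^ k) s" "(F ^^ k) x"] \<open>s \<le> x\<close> by simp
    then have "dist ((circle_map F ^^ k) (circ_proj s)) ((circle_map F ^^ k) y) < e" if "k < n" for k
      using close[OF that] N(2) unfolding x(3) funpow_circle_map_F by (meson le_less_trans less_trans)
    then show ?thesis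
      using \<open>s \<in> S\<close> dyn_dist_less_iff[OF n] by blast
  qed
  ultimately show ?thesis
    using that[of "circ_proj ` S"] \<open>finite S\<close> by blast
qed

lemma linear_dyn_covers:
  assumes "e > 0"
  obtains N where "\<And>n. n \<ge> 1 \<Longrightarrow> \<exists>C. finite C \<and> card C \<le> N * n \<and>
    UNIV \<subseteq> (\<Union>c\<in>C. {y. dyn_dist (circle_map F) n c y < e})"
proof -
  obtain N :: nat where "N > 0" "inverse (real N) < e"
    using ex_inverse_of_nat_less[OF assms] by blast
  then have "N \<ge> 1" "1 / real N < e"
    by (simp_all add: divide_inverse)
  have "\<exists>C. finite C \<and> card C \<le> (N + 1) * n \<and> UNIV \<subseteq> (\<Union>c\<in>C. {y. dyn_dist (circle_map F) n c y < e})"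
    if n: "n \<ge> 1" for n
  proof -
    obtain C where "finite C" "card C \<le> N * n + 1"
      "UNIV \<subseteq> (\<Union>c\<in>C. {y. dyn_dist (circle_map F) n c y < e})"
      using \<open>N \<ge> 1\<close> \<open>1 / real N < e\<close> n by (rule linear_dyn_cover)
    moreover have "N * n + 1 \<le> (N + 1) * n"
      using n by simp
    ultimately show ?thesis
      by (meson order.trans)
  qed
  then show ?thesis
    by (rule that)
qed

lemma dyn_dist_wandering_orbit:
  assumes wandering: "wandering_interval (F ^^ q) u v"
    and hom: "homeomorphism UNIV UNIV (circle_map F) f'" and "i < j" "q * j < n"
  defines "c \<equiv> circ_proj ((u + v) / 2)"
  shows "(v - u) / 2 \<le> dyn_dist (circle_map F) n ((f' ^^ (q * i)) c) ((f' ^^ (q * j)) c)"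
proof -
  define x0 where "x0 = (u + v) / 2"
  define k where "k = j - i"
  have "k \<ge> 1"
    unfolding k_def using \<open>i < j\<close> by simp
  have right_inverse: "(circle_map F ^^ l) ((f' ^^ l) z) = z" for l z
    using hom unfolding homeomorphism_def by (intro funpow_right_inverse) auto
  have "q * j = q * k + q * i"
    unfolding k_def using \<open>i < j\<close> by (simp add: algebra_simps)
  then have "(circle_map F ^^ (q * j)) ((f' ^^ (q * i)) c) = circ_proj ((F ^^ (q * k)) x0)"
    unfolding c_def x0_def by (simp only: funpow_add comp_apply right_inverse funpow_circle_map_F)
  moreover have "(circle_map F ^^ (q * j)) ((f' ^^ (q * j)) c) = circ_proj x0"
    unfolding c_def x0_def by (rule right_inverse)
  moreover have "(v - u) / 2 \<le> dist (circ_proj ((F ^^ (q * k)) x0)) (circ_proj x0)"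
  proof -
    obtain m where m: "dist (circ_proj ((F ^^ (q * k)) x0)) (circ_proj x0) = \<bar>(F ^^ (q * k)) x0 - x0 - of_int m\<bar>"
      using dist_circ_proj_attained by blast
    define y where "y = (F ^^ (q * k)) x0 - of_int m"
    have "u < v" and wd: "\<And>k s t m. k \<ge> 1 \<Longrightarrow> s \<in> {u<..<v} \<Longrightarrow> t \<in> {u<..<v} \<Longrightarrow>
        ((F ^^ q) ^^ k) s \<noteq> t + of_int m"
      using wandering unfolding wandering_interval_def by blast+
    then have "x0 \<in> {u<..<v}"
      unfolding x0_def by simp
    then have "y \<notin> {u<..<v}"
      using wd[OF \<open>k \<ge> 1\<close>, of x0 y m] unfolding y_def by (auto simp: funpow_mult)
    moreover have "x0 - u = (v - u) / 2" "v - x0 = (v - u) / 2"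
      unfolding x0_def by (simp_all add: field_simps)
    moreover have "dist (circ_proj ((F ^^ (q * k)) x0)) (circ_proj x0) = \<bar>y - x0\<bar>"
      unfolding m y_def by simp
    ultimately show ?thesis
      by (auto simp: abs_if)
  qed
  ultimately show ?thesis
    using dist_funpow_le_dyn_dist[OF \<open>q * j < n\<close>, of "circle_map F" "(f' ^^ (q * i)) c" "(f' ^^ (q * j)) c"]
    by simp
qed

lemma cover_num_ge_if_wandering:
  assumes q: "q \<ge> 1" and wandering: "wandering_interval (F ^^ q) u v"
    and e: "0 < e" "4 * e \<le> v - u" and n: "n \<ge> 1"
  shows "n \<le> q * cover_num (circle_map F) UNIV n e"
proof -
  obtain f' where hom: "homeomorphism UNIV UNIV (circle_map F) f'"
    by (rule homeomorphism_circle_map)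
  define M where "M = (n - 1) div q + 1"
  define p where "p i = (f' ^^ (q * i)) (circ_proj ((u + v) / 2))" for i
  have separated_lt: "2 * e \<le> dyn_dist (circle_map F) n (p i) (p j)" if "i < j" "j < M" for i j
  proof -
    have "q * j \<le> q * ((n - 1) div q)"
      using that unfolding M_def by simp
    also have "\<dots> \<le> n - 1"
      by simp
    finally have "q * j < n"
      using n by simp
    then show ?thesis
      unfolding p_def using dyn_dist_wandering_orbit[OF wandering hom \<open>i < j\<close>] e(2) by fastforce
  qed
  have separated: "2 * e \<le> dyn_dist (circle_map F) n (p i) (p j)" if "i < M" "j < M" "i \<noteq> j" for i j
  proof (cases "i < j")
    case True
    then show ?thesis
      using separated_lt that by blast
  next
    case False
    then show ?thesis
      using separated_lt[of j i] that by (simp add: dyn_dist_commute)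
  qed
  obtain N where "\<And>n. n \<ge> 1 \<Longrightarrow> \<exists>C. finite C \<and> card C \<le> N * n \<and>
      UNIV \<subseteq> (\<Union>c\<in>C. {y. dyn_dist (circle_map F) n c y < e})"
    by (rule linear_dyn_covers[OF e(1)]) blast
  then have cover: "\<exists>C. finite C \<and> UNIV \<subseteq> (\<Union>c\<in>C. {y. dyn_dist (circle_map F) n c y < e})"
    using n by blast
  have "M \<le> cover_num (circle_map F) UNIV n e"
    by (rule separated_card_le_cover_num[OF n cover subset_UNIV separated])
  moreover have "n \<le> q * M"
  proof -
    have "(n - 1) div q * q + (n - 1) mod q = n - 1" "(n - 1) mod q < q"
      using q by simp_all
    moreover have "q * M = (n - 1) div q * q + q"
      unfolding M_def by (simp add: algebra_simps)
    ultimately show ?thesis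
      by linarith
  qed
  ultimately show ?thesis
    using mult_le_mono2[of M _ q] by (meson le_trans)
qed

end

lemma hpol_eq_0_if_conjugate_to_rotation:
  fixes f g :: "circle \<Rightarrow> circle"
  assumes "top_conjugate f g" "is_rotation g"
  shows "hpol f = 0"
proof (rule hpol_eqI[of 1])
  fix e :: real
  assume "0 < e" "e < 1"
  obtain K where K: "\<And>n. n \<ge> 1 \<Longrightarrow> cover_num f UNIV n e \<le> K"
    by (rule cover_num_bounded_if_conjugate_to_isometry[OF compact_UNIV_circle assms(1) dist_rotation[OF assms(2)] \<open>0 < e\<close>])
      blast
  have "\<forall>\<^sub>F n in sequentially. cover_num f UNIV n e \<le> K"
    using eventually_ge_at_top[of 1] by (rule eventually_mono) (rule K)
  then have "cover_exponent f e = ereal 0"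
    by (intro cover_exponent_eqI ln_over_ln_tendsto_0_if_bounded)
  then show "cover_exponent f e = 0"
    by simp
qed simp

lemma (in circle_lift) hpol_eq_1_if_wandering:
  assumes q: "q \<ge> 1" and wandering: "wandering_interval (F ^^ q) u v"
  shows "hpol (circle_map F) = 1"
proof (rule hpol_eqI[of "(v - u) / 4"])
  show "(v - u) / 4 > 0"
    using wandering by (simp add: wandering_interval_def)
  fix e :: real
  assume "0 < e" "e < (v - u) / 4"
  obtain N where covers: "\<And>n. n \<ge> 1 \<Longrightarrow> \<exists>C. finite C \<and> card C \<le> N * n \<and>
      UNIV \<subseteq> (\<Union>c\<in>C. {y. dyn_dist (circle_map F) n c y < e})"
    by (rule linear_dyn_covers[OF \<open>0 < e\<close>]) blast
  have "n \<le> q * cover_num (circle_map F) UNIV n e \<and> cover_num (circle_map F) UNIV n e \<le> N * n"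
    if n: "n \<ge> 1" for n
  proof
    show "n \<le> q * cover_num (circle_map F) UNIV n e"
      using cover_num_ge_if_wandering[OF q wandering \<open>0 < e\<close> _ n] \<open>e < (v - u) / 4\<close> by simp
    obtain C where "finite C" "card C \<le> N * n" "UNIV \<subseteq> (\<Union>c\<in>C. {y. dyn_dist (circle_map F) n c y < e})"
      using covers[OF n] by blast
    then show "cover_num (circle_map F) UNIV n e \<le> N * n"
      using cover_num_le_card[of C UNIV] by (meson le_trans)
  qed
  then have "\<forall>\<^sub>F n in sequentially. n \<le> q * cover_num (circle_map F) UNIV n e \<and> cover_num (circle_map F) UNIV n e \<le> N * n"
    using eventually_ge_at_top[of 1] by (rule eventually_mono[rotated])
  then have "cover_exponent (circle_map F) e = ereal 1"
    by (intro cover_exponent_eqI ln_over_ln_tendsto_1_if_linear)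
  then show "cover_exponent (circle_map F) e = 1"
    by simp
qed

lemma orientation_preserving_homeo_imp_circle_map:
  assumes "orientation_preserving_homeo f"
  obtains F where "circle_lift F" "f = circle_map F"
proof -
  obtain F where "circle_lift F" and F: "\<And>x. f (circ_proj x) = circ_proj (F x)"
    using assms unfolding orientation_preserving_homeo_def circle_lift_def by blast
  moreover have "f = circle_map F"
  proof
    fix c
    obtain x where "c = circ_proj x"
      by (rule circ_proj_cases)
    then show "f c = circle_map F c"
      using F circle_lift.circle_map_F_circ_proj[OF \<open>circle_lift F\<close>] by simp
  qed
  ultimately show ?thesis
    using that by blast
qed

theorem theorem1:
  fixes f :: "circle \<Rightarrow> circle"
  assumes "orientation_preserving_homeo f"
  shows "(hpol f = 0 \<or> hpol f = 1) \<and>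
         (hpol f = 0 \<longleftrightarrow> (\<exists>g. is_rotation g \<and> top_conjugate f g))"
proof -
  obtain F where "circle_lift F" and f: "f = circle_map F"
    using assms by (rule orientation_preserving_homeo_imp_circle_map)
  interpret circle_lift F
    by fact
  show ?thesis
  proof (cases "\<exists>g. is_rotation g \<and> top_conjugate f g")
    case True
    then show ?thesis
      using hpol_eq_0_if_conjugate_to_rotation by blast
  next
    case False
    then have "\<not> conjugate_to_translation F"
      using conjugate_to_rotation_if_conjugate_to_translation f by blast
    then obtain q u v where "q \<ge> 1" "wandering_interval (F ^^ q) u v"
      using rotation_dichotomy by blast
    then have "hpol f = 1"
      unfolding f by (rule hpol_eq_1_if_wandering)
    then show ?thesis
      using False by simp
  qed
qed

end
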